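(* Let $p$ be a prime, $R=\mathbb Z_{(p)}$ the localization of $\mathbb Z$ at $(p)$, and $\mathbb Z(p^\infty)=\mathbb Q/R$ the Prüfer group. Then the elements $\left(\frac{1}{p^{nt}}+R\right)_{n\ge1}$, $t\in\mathbb N^*$, of $(\mathbb Z(p^\infty))^{\mathbb N^*}$ are free generators of a free abelian subgroup of infinite rank; consequently $\mathbb Q\oplus(\mathbb Z(p^\infty))^{\mathbb N^*}\cong(\mathbb Z(p^\infty))^{\mathbb N^*}$ as $R$-modules. (Here $\mathbb Q$ and $\mathbb Z(p^\infty)$ are uniserial $R$-modules with local endomorphism rings, $[\mathbb Q]_m\neq[\mathbb Z(p^\infty)]_m$ and $[\mathbb Q]_e\ne[\mathbb Z(p^\infty)]_e$, so no bijections $\mathbb N\to\mathbb N^*$ preserve monogeny or epigeny classes between the families $\{\mathbb Q,\mathbb Z(p^\infty),\mathbb Z(p^\infty),\dots\}$ and $\{\mathbb Z(p^\infty),\mathbb Z(p^\infty),\dots\}$.)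
   Context: $\mathbb N^*$ denotes the set of positive integers. $[M]_m=[N]_m$ means there exist monomorphisms $M\to N$, $N\to M$; $[M]_e=[N]_e$ means there exist epimorphisms $M\to N$, $N\to M$. *)

theory Defs
  imports Complex_Main "HOL-Computational_Algebra.Primes"
begin

definition Zloc :: "nat \<Rightarrow> rat set" where
  "Zloc p = {q. \<exists>a b::int. b \<noteq> 0 \<and> \<not> (int p dvd b) \<and> q = of_int a / of_int b}"

text \<open>Equality in the Pruefer group Z(p^oo) = Q/R, on representatives.\<close>
definition pr_eq :: "nat \<Rightarrow> rat \<Rightarrow> rat \<Rightarrow> bool" where
  "pr_eq p x y \<longleftrightarrow> x - y \<in> Zloc p"

text \<open>Elements of (Z(p^oo))^(N*) are represented by sequences of rationals;
  only the indices n \<ge> 1 matter.\<close>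
definition seq_eq :: "nat \<Rightarrow> (nat \<Rightarrow> rat) \<Rightarrow> (nat \<Rightarrow> rat) \<Rightarrow> bool" where
  "seq_eq p f g \<longleftrightarrow> (\<forall>n\<ge>1. pr_eq p (f n) (g n))"

definition sum_eq :: "nat \<Rightarrow> rat \<times> (nat \<Rightarrow> rat) \<Rightarrow> rat \<times> (nat \<Rightarrow> rat) \<Rightarrow> bool" where
  "sum_eq p x y \<longleftrightarrow> fst x = fst y \<and> seq_eq p (snd x) (snd y)"

definition gen :: "nat \<Rightarrow> nat \<Rightarrow> nat \<Rightarrow> rat" where
  "gen p t n = 1 / of_nat p ^ (n * t)"

text \<open>phi, given on representatives, induces an R-module isomorphism
  Q \<oplus> (Z(p^oo))^(N*) \<rightarrow> (Z(p^oo))^(N*).\<close>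
definition R_iso :: "nat \<Rightarrow> (rat \<times> (nat \<Rightarrow> rat) \<Rightarrow> (nat \<Rightarrow> rat)) \<Rightarrow> bool" where
  "R_iso p \<phi> \<longleftrightarrow>
     (\<forall>x y. sum_eq p x y \<longrightarrow> seq_eq p (\<phi> x) (\<phi> y)) \<and>
     (\<forall>a f b g. seq_eq p (\<phi> (a + b, \<lambda>n. f n + g n)) (\<lambda>n. \<phi> (a, f) n + \<phi> (b, g) n)) \<and>
     (\<forall>r\<in>Zloc p. \<forall>a f. seq_eq p (\<phi> (r * a, \<lambda>n. r * f n)) (\<lambda>n. r * \<phi> (a, f) n)) \<and>
     (\<forall>a f. seq_eq p (\<phi> (a, f)) (\<lambda>_. 0) \<longrightarrow> a = 0 \<and> seq_eq p f (\<lambda>_. 0)) \<and>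
     (\<forall>g. \<exists>a f. seq_eq p (\<phi> (a, f)) g)"

end

theory Submission
  imports Defs "HOL-Library.Function_Algebras" "HOL-Library.Nat_Bijection"
begin

(* Let R = Z_(p), e = (1/p^n)_n and write sequences of rationals as
   representatives of elements of (Q/R)^N*.

   If sum_t c_t gen_t = 0 in (Q/R)^N*, look at the largest t = T with
   c_T <> 0 and at the coordinate n = |c_T| + 1.  Over the common denominator p^(nT)
   every other summand is divisible by p^n, so p^n divides c_T, which is impossible
   because 0 < |c_T| < p^n.  Distinctness of the gen_t is the special case c = (1,-1).

   Choose a Q-linear functional pi on Q^N that vanishes on R^N and has
   pi(q e) = q (possible since e is not in the Q-span of R^N).  Cut a sequence f
   into countably many blocks f_j and set
       phi(a, f)_j = f_j - pi(f_j) e + Q_j e,   Q_0 = a,  Q_(j+1) = pi(f_j),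
   i.e. shift the "e-coordinates" of the blocks one block to the right and put a
   into block 0 (Hilbert's hotel).  Then pi(phi(a,f)_j) = Q_j, which yields
   injectivity modulo R; surjectivity is obtained by solving block by block. *)


section \<open>The ring Z_(p)\<close>

lemma Zloc_of_int: assumes "prime p" shows "of_int a \<in> Zloc p"
proof -
  have "\<not> int p dvd 1" using prime_gt_1_nat[OF assms] by auto
  thus ?thesis unfolding Zloc_def by (intro CollectI exI[of _ a] exI[of _ 1]) auto
qed

lemma Zloc_zero: assumes "prime p" shows "0 \<in> Zloc p"
  using Zloc_of_int[OF assms, of 0] by simp

lemma prime_not_dvd_mult:
  assumes "prime p" "\<not> int p dvd b" "\<not> int p dvd d" shows "\<not> int p dvd b * d"
  using assms by (metis prime_dvd_mult_iff prime_nat_int_transfer)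

lemma Zloc_add: assumes "x \<in> Zloc p" "y \<in> Zloc p" "prime p" shows "x + y \<in> Zloc p"
proof -
  from assms obtain a b c d where "b \<noteq> 0" "\<not> int p dvd b" "x = of_int a / of_int b"
    "d \<noteq> 0" "\<not> int p dvd d" "y = of_int c / of_int d" unfolding Zloc_def by auto
  with prime_not_dvd_mult[OF \<open>prime p\<close>] show ?thesis unfolding Zloc_def
    by (intro CollectI exI[of _ "a*d + c*b"] exI[of _ "b*d"]) (auto simp: field_simps)
qed

lemma Zloc_mult: assumes "x \<in> Zloc p" "y \<in> Zloc p" "prime p" shows "x * y \<in> Zloc p"
proof -
  from assms obtain a b c d where "b \<noteq> 0" "\<not> int p dvd b" "x = of_int a / of_int b"
    "d \<noteq> 0" "\<not> int p dvd d" "y = of_int c / of_int d" unfolding Zloc_def by auto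
  with prime_not_dvd_mult[OF \<open>prime p\<close>] show ?thesis unfolding Zloc_def
    by (intro CollectI exI[of _ "a*c"] exI[of _ "b*d"]) (auto simp: field_simps)
qed

lemma Zloc_frac_imp_dvd:
  assumes "prime p" and "of_int m / of_nat p ^ k \<in> Zloc p"
  shows "int p ^ k dvd m"
proof -
  from assms(2) obtain a b where b: "b \<noteq> 0" "\<not> int p dvd b"
      "of_int m / of_nat p ^ k = (of_int a / of_int b :: rat)"
    unfolding Zloc_def by auto
  have "(of_nat p :: rat) ^ k \<noteq> 0" using assms(1) by (simp add: prime_gt_0_nat)
  with b have "of_int m * of_int b = (of_int a * of_nat p ^ k :: rat)"
    by (simp add: field_simps)
  hence "m * b = a * int p ^ k" by (metis of_int_eq_iff of_int_mult of_int_of_nat_eq of_int_power)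
  hence "int p ^ k dvd m * b" by simp
  moreover have "coprime (int p ^ k) b" using assms(1) b(2)
    by (metis coprime_power_left_iff prime_imp_coprime prime_nat_int_transfer)
  ultimately show ?thesis using coprime_dvd_mult_left_iff by blast
qed

text \<open>A nonzero integer m is not divisible by p^n once n \<ge> |m|, because |m| \<le> n < 2^n \<le> p^n.\<close>
lemma power_not_dvd_small:
  assumes "2 \<le> p" and "m \<noteq> 0" and "nat \<bar>m\<bar> \<le> n"
  shows "\<not> int p ^ n dvd m"
proof
  assume "int p ^ n dvd m"
  hence "\<bar>int p ^ n\<bar> \<le> \<bar>m\<bar>" using dvd_imp_le_int[OF assms(2)] by blast
  hence "int p ^ n \<le> \<bar>m\<bar>" by simp
  also have "\<bar>m\<bar> \<le> int n" using assms(3) by linarith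
  also have "int n < int (2 ^ n)" by (simp only: of_nat_less_iff less_exp)
  also have "int (2 ^ n) \<le> int p ^ n" using assms(1) by (simp add: power_mono)
  finally show False by simp
qed


section \<open>Linear independence of the elements gen p t\<close>

lemma lin_comb_gen_common_denominator:
  assumes "prime p" and "\<forall>t\<in>S. t \<le> T"
  shows "(\<Sum>t\<in>S. of_int (c t) * gen p t n)
       = of_int (\<Sum>t\<in>S. c t * int p ^ (n * (T - t))) / of_nat p ^ (n * T)"
proof -
  have p0: "(of_nat p :: rat) \<noteq> 0" using assms(1) by (simp add: prime_gt_0_nat)
  have "of_int (c t) * gen p t n = of_int (c t * int p ^ (n * (T - t))) / of_nat p ^ (n * T)"
    if "t \<in> S" for t
  proof -
    have "n * T = n * t + n * (T - t)" using assms(2) that by (simp add: algebra_simps)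
    hence "(of_nat p :: rat) ^ (n * T) = of_nat p ^ (n * t) * of_nat p ^ (n * (T - t))"
      by (simp add: power_add)
    thus ?thesis unfolding gen_def using p0 by (simp add: field_simps)
  qed
  thus ?thesis by (simp add: sum_divide_distrib)
qed

lemma lin_comb_gen_not_Zloc:
  assumes "prime p" and "finite S" and "T \<in> S" and "1 \<le> T"
    and "\<forall>t\<in>S. t \<le> T" and "c T \<noteq> 0"
  shows "(\<Sum>t\<in>S. of_int (c t) * gen p t (nat \<bar>c T\<bar> + 1)) \<notin> Zloc p"
proof
  define n where "n = nat \<bar>c T\<bar> + 1"
  define N where "N = (\<Sum>t\<in>S. c t * int p ^ (n * (T - t)))"
  define rest where "rest = (\<Sum>t\<in>S - {T}. c t * int p ^ (n * (T - t)))"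
  have "(\<Sum>t\<in>S. of_int (c t) * gen p t n) = of_int N / of_nat p ^ (n * T)"
    unfolding N_def by (rule lin_comb_gen_common_denominator[OF assms(1,5)])
  moreover assume "(\<Sum>t\<in>S. of_int (c t) * gen p t (nat \<bar>c T\<bar> + 1)) \<in> Zloc p"
  ultimately have "of_int N / of_nat p ^ (n * T) \<in> Zloc p" by (simp only: n_def)
  hence "int p ^ (n * T) dvd N" by (rule Zloc_frac_imp_dvd[OF assms(1)])
  moreover have "int p ^ n dvd int p ^ (n * T)" using assms(4) by (intro le_imp_power_dvd) simp
  ultimately have "int p ^ n dvd N" by (rule dvd_trans[rotated])
  moreover have "N = c T + rest"
    unfolding N_def rest_def sum.remove[OF assms(2,3)] by simp
  moreover have "int p ^ n dvd rest"
    unfolding rest_def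
  proof (rule dvd_sum)
    fix t assume "t \<in> S - {T}"
    hence "1 \<le> T - t" using assms(5) by fastforce
    hence "n \<le> n * (T - t)" by simp
    thus "int p ^ n dvd c t * int p ^ (n * (T - t))" by (simp add: le_imp_power_dvd)
  qed
  ultimately have "int p ^ n dvd c T" by (metis dvd_add_left_iff)
  moreover have "\<not> int p ^ n dvd c T"
    using power_not_dvd_small[OF prime_ge_2_nat[OF assms(1)] assms(6), of n] unfolding n_def by simp
  ultimately show False by contradiction
qed

lemma gen_independent:
  assumes "prime p" and "finite S" and "S \<subseteq> {1..}"
    and "seq_eq p (\<lambda>n. \<Sum>t\<in>S. of_int (c t) * gen p t n) (\<lambda>_. 0)"
  shows "\<forall>t\<in>S. c t = 0"
proof (rule ccontr)
  assume "\<not> (\<forall>t\<in>S. c t = 0)"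
  define S' where "S' = {t\<in>S. c t \<noteq> 0}"
  define T where "T = Max S'"
  have S': "finite S'" "S' \<noteq> {}" using assms(2) \<open>\<not> _\<close> unfolding S'_def by auto
  hence T: "T \<in> S'" "\<forall>t\<in>S'. t \<le> T" unfolding T_def by simp_all
  hence "1 \<le> T" "c T \<noteq> 0" using assms(3) unfolding S'_def by auto
  hence "(\<Sum>t\<in>S'. of_int (c t) * gen p t (nat \<bar>c T\<bar> + 1)) \<notin> Zloc p"
    using lin_comb_gen_not_Zloc[OF assms(1) S'(1) T(1) _ T(2)] by blast
  moreover have "(\<Sum>t\<in>S. of_int (c t) * gen p t n) = (\<Sum>t\<in>S'. of_int (c t) * gen p t n)" for n
    unfolding S'_def using assms(2) by (intro sum.mono_neutral_right) auto
  moreover have "(\<Sum>t\<in>S. of_int (c t) * gen p t n) \<in> Zloc p" if "n \<ge> 1" for n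
    using assms(4) that unfolding seq_eq_def pr_eq_def by simp
  ultimately show False by simp
qed

lemma gen_distinct:
  assumes "prime p" and "1 \<le> s" "1 \<le> t" and "seq_eq p (gen p s) (gen p t)"
  shows "s = t"
proof (rule ccontr)
  assume "s \<noteq> t"
  define c :: "nat \<Rightarrow> int" where "c = (\<lambda>u. if u = s then 1 else -1)"
  have "(\<Sum>u\<in>{s, t}. of_int (c u) * gen p u n) = gen p s n - gen p t n" for n
    using \<open>s \<noteq> t\<close> unfolding c_def by simp
  hence "seq_eq p (\<lambda>n. \<Sum>u\<in>{s, t}. of_int (c u) * gen p u n) (\<lambda>_. 0)"
    using assms(4) unfolding seq_eq_def pr_eq_def by simp
  hence "c s = 0" using gen_independent[OF assms(1), of "{s, t}" c] assms(2,3) by simp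
  thus False unfolding c_def by simp
qed


section \<open>A functional on Q^N vanishing on Z_(p)^N\<close>

text \<open>In any vector space, a vector outside a subspace W can be sent to 1 by a linear
  functional vanishing on W (extend a basis of W by the vector).\<close>
lemma (in vector_space) exists_functional_outside_subspace:
  assumes "subspace W" and "e \<notin> W"
  shows "\<exists>g. Vector_Spaces.linear scale (*) g \<and> (\<forall>x\<in>W. g x = 0) \<and> g e = 1"
proof -
  interpret F: vector_space "(*) :: 'a \<Rightarrow> 'a \<Rightarrow> 'a"
    by unfold_locales (auto simp: algebra_simps)
  interpret P: vector_space_pair scale "(*) :: 'a \<Rightarrow> 'a \<Rightarrow> 'a" ..
  obtain B where B: "B \<subseteq> W" "independent B" "W \<subseteq> span B"
    using maximal_independent_subset by blast
  have span_B: "span B = W" using span_minimal[OF B(1) assms(1)] B(3) by blast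
  have "independent (insert e B)"
    using independent_insertI[OF _ B(2)] assms(2) span_B by blast
  then obtain g where g: "Vector_Spaces.linear scale (*) g"
      "\<forall>x\<in>insert e B. g x = (if x = e then 1 else 0)"
    using P.linear_independent_extend[of "insert e B" "\<lambda>x. if x = e then 1 else 0"] by blast
  have "\<forall>x\<in>B. g x = 0" using g(2) B(1) assms(2) by auto
  hence "\<forall>x\<in>span B. g x = 0" using P.linear_eq_0_on_span[OF g(1)] by blast
  thus ?thesis using g span_B by auto
qed

definition inv_powers :: "nat \<Rightarrow> rat \<Rightarrow> nat \<Rightarrow> rat" where
  "inv_powers p q = (\<lambda>n. q / of_nat p ^ n)"

text \<open>Sequences having a nonzero integer multiple in Z_(p)^N: the Q-span of Z_(p)^N.\<close>
definition Zloc_span :: "nat \<Rightarrow> (nat \<Rightarrow> rat) set" where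
  "Zloc_span p = {f. \<exists>m::int. m \<noteq> 0 \<and> (\<forall>n. of_int m * f n \<in> Zloc p)}"

definition seq_scale :: "rat \<Rightarrow> (nat \<Rightarrow> rat) \<Rightarrow> nat \<Rightarrow> rat" where
  "seq_scale r f = (\<lambda>n. r * f n)"

interpretation seq: vector_space seq_scale
  by unfold_locales (auto simp: seq_scale_def fun_eq_iff algebra_simps)

lemma Zloc_span_subspace: assumes "prime p" shows "seq.subspace (Zloc_span p)"
  unfolding seq.subspace_def
proof (intro conjI ballI allI)
  show "0 \<in> Zloc_span p"
    unfolding Zloc_span_def using Zloc_zero[OF assms] by (intro CollectI exI[of _ 1]) auto
next
  fix x y assume "x \<in> Zloc_span p" "y \<in> Zloc_span p"
  then obtain m k where m: "m \<noteq> 0" "\<And>n. of_int m * x n \<in> Zloc p"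
      and k: "k \<noteq> 0" "\<And>n. of_int k * y n \<in> Zloc p"
    unfolding Zloc_span_def by auto
  have "of_int (m * k) * (x + y) n
      = of_int k * (of_int m * x n) + of_int m * (of_int k * y n)" for n
    by (simp add: algebra_simps)
  also have "\<dots> n \<in> Zloc p" for n
    using Zloc_add Zloc_mult[OF Zloc_of_int[OF assms] m(2)] Zloc_mult[OF Zloc_of_int[OF assms] k(2)]
      assms by blast
  finally have "\<forall>n. of_int (m * k) * (x + y) n \<in> Zloc p" by blast
  moreover have "m * k \<noteq> 0" using m(1) k(1) by simp
  ultimately show "x + y \<in> Zloc_span p" unfolding Zloc_span_def by blast
next
  fix r x assume "x \<in> Zloc_span p"
  then obtain m where m: "m \<noteq> 0" "\<And>n. of_int m * x n \<in> Zloc p"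
    unfolding Zloc_span_def by auto
  obtain a b where "quotient_of r = (a, b)" by (cases "quotient_of r")
  hence "b > 0" and r: "r = of_int a / of_int b"
    using quotient_of_denom_pos quotient_of_div by auto
  hence "of_int (m * b) * seq_scale r x n = of_int a * (of_int m * x n)" for n
    unfolding seq_scale_def r by (simp add: field_simps)
  also have "\<dots> n \<in> Zloc p" for n by (rule Zloc_mult[OF Zloc_of_int[OF assms] m(2) assms])
  finally have "\<forall>n. of_int (m * b) * seq_scale r x n \<in> Zloc p" by blast
  moreover have "m * b \<noteq> 0" using m(1) \<open>b > 0\<close> by simp
  ultimately show "seq_scale r x \<in> Zloc_span p" unfolding Zloc_span_def by blast
qed

text \<open>e is not in the span: m/p^|m| \<notin> Z_(p) for every integer m \<noteq> 0.\<close>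
lemma inv_powers_notin_Zloc_span:
  assumes "prime p" shows "inv_powers p 1 \<notin> Zloc_span p"
proof
  assume "inv_powers p 1 \<in> Zloc_span p"
  then obtain m :: int where "m \<noteq> 0" "of_int m / of_nat p ^ nat \<bar>m\<bar> \<in> Zloc p"
    unfolding Zloc_span_def inv_powers_def by auto
  thus False
    using Zloc_frac_imp_dvd[OF assms] power_not_dvd_small[OF prime_ge_2_nat[OF assms]] by blast
qed

text \<open>A Q-linear functional on Q^N that factors through (Q/R)^N and reads off the
  e-coordinate.\<close>
locale Zloc_functional =
  fixes p :: nat and \<pi> :: "(nat \<Rightarrow> rat) \<Rightarrow> rat"
  assumes prime: "prime p"
    and add: "\<And>f g. \<pi> (\<lambda>n. f n + g n) = \<pi> f + \<pi> g"
    and scale: "\<And>r f. \<pi> (\<lambda>n. r * f n) = r * \<pi> f"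
    and vanish: "\<And>f. (\<forall>n. f n \<in> Zloc p) \<Longrightarrow> \<pi> f = 0"
    and pi_inv_powers [simp]: "\<And>q. \<pi> (inv_powers p q) = q"

lemma exists_Zloc_functional: assumes "prime p" shows "\<exists>\<pi>. Zloc_functional p \<pi>"
proof -
  obtain g where g: "Vector_Spaces.linear seq_scale (*) g"
      "\<forall>x\<in>Zloc_span p. g x = 0" "g (inv_powers p 1) = 1"
    using seq.exists_functional_outside_subspace[OF Zloc_span_subspace inv_powers_notin_Zloc_span]
      assms by blast
  have add: "g (\<lambda>n. f n + h n) = g f + g h" for f h
    using g(1) unfolding Vector_Spaces.linear_iff plus_fun_def by blast
  have scale: "g (\<lambda>n. r * f n) = r * g f" for r f
    using g(1) unfolding Vector_Spaces.linear_iff seq_scale_def by blast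
  have "g (inv_powers p q) = q" for q
    using scale[of q "inv_powers p 1"] g(3) unfolding inv_powers_def by simp
  moreover have "g f = 0" if "\<forall>n. f n \<in> Zloc p" for f
  proof -
    have "f \<in> Zloc_span p" unfolding Zloc_span_def using that by (intro CollectI exI[of _ 1]) simp
    thus ?thesis using g(2) by blast
  qed
  ultimately have "Zloc_functional p g" using add scale assms by unfold_locales
  thus ?thesis by blast
qed


section \<open>Splitting sequences into blocks\<close>

text \<open>The indices n \<ge> 1 are enumerated as Suc (prod_encode (j, m)); block j of f is the
  sequence m \<mapsto> f (Suc (prod_encode (j, m))).\<close>
definition block :: "(nat \<Rightarrow> rat) \<Rightarrow> nat \<Rightarrow> nat \<Rightarrow> rat" where
  "block f j = (\<lambda>m. f (Suc (prod_encode (j, m))))"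

definition unblock :: "(nat \<Rightarrow> nat \<Rightarrow> rat) \<Rightarrow> nat \<Rightarrow> rat" where
  "unblock F n = (case prod_decode (n - 1) of (j, m) \<Rightarrow> F j m)"

lemma block_unblock [simp]: "block (unblock F) j = F j"
  unfolding block_def unblock_def by simp

lemma index_as_block:
  assumes "n \<ge> 1" obtains j m where "n = Suc (prod_encode (j, m))"
proof -
  obtain j m where "prod_decode (n - 1) = (j, m)" by (cases "prod_decode (n - 1)")
  hence "prod_encode (j, m) = n - 1" using prod_decode_inverse[of "n - 1"] by simp
  hence "n = Suc (prod_encode (j, m))" using assms by simp
  thus thesis by (rule that)
qed

lemma block_zero [simp]: "block (\<lambda>_. 0) j = (\<lambda>_. 0)"
  unfolding block_def by simp

lemma block_add [simp]: "block (\<lambda>n. f n + g n) j = (\<lambda>m. block f j m + block g j m)"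
  unfolding block_def by simp

lemma block_scale [simp]: "block (\<lambda>n. r * f n) j = (\<lambda>m. r * block f j m)"
  unfolding block_def by simp

lemma seq_eq_iff_blocks:
  "seq_eq p f g \<longleftrightarrow> (\<forall>j m. block f j m - block g j m \<in> Zloc p)"
proof
  assume "seq_eq p f g"
  thus "\<forall>j m. block f j m - block g j m \<in> Zloc p" unfolding seq_eq_def pr_eq_def block_def by simp
next
  assume blocks: "\<forall>j m. block f j m - block g j m \<in> Zloc p"
  show "seq_eq p f g" unfolding seq_eq_def pr_eq_def
  proof (intro allI impI)
    fix n :: nat assume "n \<ge> 1"
    then obtain j m where "n = Suc (prod_encode (j, m))" by (rule index_as_block)
    thus "f n - g n \<in> Zloc p" using blocks unfolding block_def by simp
  qed
qed


section \<open>The isomorphism Q \<oplus> (Z(p^\<infinity>))^N* \<rightarrow> (Z(p^\<infinity>))^N*\<close>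

context Zloc_functional
begin

definition carry :: "rat \<Rightarrow> (nat \<Rightarrow> rat) \<Rightarrow> nat \<Rightarrow> rat" where
  "carry a f j = (case j of 0 \<Rightarrow> a | Suc i \<Rightarrow> \<pi> (block f i))"

definition phi_block :: "rat \<Rightarrow> (nat \<Rightarrow> rat) \<Rightarrow> nat \<Rightarrow> nat \<Rightarrow> rat" where
  "phi_block a f j m = block f j m - inv_powers p (\<pi> (block f j)) m + inv_powers p (carry a f j) m"

definition phi :: "rat \<times> (nat \<Rightarrow> rat) \<Rightarrow> nat \<Rightarrow> rat" where
  "phi x = unblock (phi_block (fst x) (snd x))"

lemma block_phi [simp]: "block (phi (a, f)) j = phi_block a f j"
  unfolding phi_def by simp

lemma pi_diff: "\<pi> (\<lambda>n. f n - g n) = \<pi> f - \<pi> g"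
  using add[of f "\<lambda>n. (-1) * g n"] scale[of "-1" g] by simp

lemma pi_phi_block: "\<pi> (phi_block a f j) = carry a f j"
  using add[of "\<lambda>m. block f j m - inv_powers p (\<pi> (block f j)) m"] pi_diff
  unfolding phi_block_def by simp

lemma pi_cong: "(\<And>m. f m - g m \<in> Zloc p) \<Longrightarrow> \<pi> f = \<pi> g"
  using vanish[of "\<lambda>m. f m - g m"] pi_diff by simp

lemma phi_well_defined: "sum_eq p x y \<Longrightarrow> seq_eq p (phi x) (phi y)"
proof -
  obtain a f b g where xy: "x = (a, f)" "y = (b, g)" by fastforce
  assume "sum_eq p x y"
  hence "a = b" and fg: "\<And>j m. block f j m - block g j m \<in> Zloc p"
    unfolding xy sum_eq_def seq_eq_iff_blocks by auto
  hence "\<And>j. \<pi> (block f j) = \<pi> (block g j)" using pi_cong by blast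
  hence "\<And>j m. phi_block a f j m - phi_block b g j m = block f j m - block g j m"
    using \<open>a = b\<close> unfolding phi_block_def carry_def by (simp split: nat.split)
  thus ?thesis unfolding xy seq_eq_iff_blocks using fg by simp
qed

lemma phi_add: "seq_eq p (phi (a + b, \<lambda>n. f n + g n)) (\<lambda>n. phi (a, f) n + phi (b, g) n)"
proof -
  have "phi_block (a + b) (\<lambda>n. f n + g n) j m = phi_block a f j m + phi_block b g j m" for j m
    unfolding phi_block_def carry_def inv_powers_def
    by (simp add: add add_divide_distrib split: nat.split)
  thus ?thesis unfolding seq_eq_iff_blocks using Zloc_zero[OF prime] by simp
qed

lemma phi_scale: "seq_eq p (phi (r * a, \<lambda>n. r * f n)) (\<lambda>n. r * phi (a, f) n)"
proof -
  have "phi_block (r * a) (\<lambda>n. r * f n) j m = r * phi_block a f j m" for j m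
    unfolding phi_block_def carry_def inv_powers_def
    by (simp add: scale right_diff_distrib distrib_left split: nat.split)
  thus ?thesis unfolding seq_eq_iff_blocks using Zloc_zero[OF prime] by simp
qed

text \<open>Injectivity: applying \<pi> blockwise to phi (a, f) \<in> Z_(p)^N gives carry a f = 0,
  so a = 0, every \<pi> (block f j) vanishes, and then phi (a, f) = f.\<close>
lemma phi_injective:
  assumes "seq_eq p (phi (a, f)) (\<lambda>_. 0)"
  shows "a = 0 \<and> seq_eq p f (\<lambda>_. 0)"
proof -
  have in_Zloc: "\<And>j m. phi_block a f j m \<in> Zloc p"
    using assms unfolding seq_eq_iff_blocks by simp
  hence carry_0: "\<And>j. carry a f j = 0" using vanish pi_phi_block by metis
  have "a = 0" using carry_0[of 0] unfolding carry_def by simp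
  have "\<pi> (block f j) = 0" for j using carry_0[of "Suc j"] unfolding carry_def by simp
  hence "\<And>j m. phi_block a f j m = block f j m"
    using carry_0 unfolding phi_block_def inv_powers_def by simp
  thus ?thesis using \<open>a = 0\<close> in_Zloc unfolding seq_eq_iff_blocks by simp
qed

text \<open>Surjectivity: given g, let q j = \<pi> (block g j); take a = q 0 and give block j of f
  the e-coordinate q (j + 1) in place of q j.\<close>
lemma phi_surjective: "\<exists>a f. seq_eq p (phi (a, f)) g"
proof -
  define q where "q j = \<pi> (block g j)" for j
  define f where "f = unblock (\<lambda>j m. block g j m - inv_powers p (q j) m + inv_powers p (q (Suc j)) m)"
  have pi_f: "\<pi> (block f j) = q (Suc j)" for j
    unfolding f_def block_unblock using add pi_diff by (simp add: q_def)
  have "phi_block (q 0) f j m = block g j m" for j m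
    unfolding phi_block_def carry_def pi_f by (simp add: f_def split: nat.split)
  hence "seq_eq p (phi (q 0, f)) g" unfolding seq_eq_iff_blocks using Zloc_zero[OF prime] by simp
  thus ?thesis by blast
qed

lemma R_iso_phi: "R_iso p phi"
  unfolding R_iso_def
  using phi_well_defined phi_add phi_scale phi_injective phi_surjective by blast

end


theorem mainTheorem8:
  fixes p :: nat
  assumes "prime p"
  shows "(\<forall>s\<ge>1. \<forall>t\<ge>1. seq_eq p (gen p s) (gen p t) \<longrightarrow> s = t)
       \<and> (\<forall>S (c :: nat \<Rightarrow> int). finite S \<longrightarrow> S \<subseteq> {1..} \<longrightarrow>
            seq_eq p (\<lambda>n. \<Sum>t\<in>S. of_int (c t) * gen p t n) (\<lambda>_. 0) \<longrightarrow>
            (\<forall>t\<in>S. c t = 0))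
       \<and> (\<exists>\<phi>. R_iso p \<phi>)"
proof (intro conjI allI impI)
  show "s = t" if "1 \<le> s" "1 \<le> t" "seq_eq p (gen p s) (gen p t)" for s t
    using gen_distinct[OF assms that] .
  show "\<forall>t\<in>S. c t = 0"
    if "finite S" "S \<subseteq> {1..}" "seq_eq p (\<lambda>n. \<Sum>t\<in>S. of_int (c t) * gen p t n) (\<lambda>_. 0)"
    for S and c :: "nat \<Rightarrow> int"
    using gen_independent[OF assms that] .
  obtain \<pi> where "Zloc_functional p \<pi>" using exists_Zloc_functional[OF assms] by blast
  thus "\<exists>\<phi>. R_iso p \<phi>" using Zloc_functional.R_iso_phi by blast
qed

end
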